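(* $(I(\mathbb N),\tau_{pp})$ is a Polish topological inverse semigroup, and $d=\rho+\rho^\ast$ is a complete metric compatible with $\tau_{pp}$.
   Context: $I(\mathbb N)$ is the set of all bijections $f:A\to B$ with $A,B\subseteq\mathbb N$ (including the empty map), $\mathrm{dom}(f)=A$, $\mathrm{im}(f)=B$, under composition ($\mathrm{dom}(f\circ g)=g^{-1}(\mathrm{dom}(f)\cap\mathrm{im}(g))$) and inversion $f\mapsto f^{-1}$. For $x,y$: $v(x,y)=\{f: x\in\mathrm{dom}(f), f(x)=y\}$, $w_1(x)=\{f: x\notin\mathrm{dom}(f)\}$, $w_2(y)=\{f: y\notin\mathrm{im}(f)\}$; $\tau_{pp}$ is the topology generated by all these sets. For $f,g\in I(\mathbb N)$ and $n\in\mathbb N$ let $a_{(f,g)}(n)=0$ if $n\in\mathrm{dom}(f)\cap\mathrm{dom}(g)$ or $n\notin\mathrm{dom}(f)\cup\mathrm{dom}(g)$, and $1$ otherwise; $b_{(f,g)}(n)=\min\{1,|f(n)-g(n)|\}$ if $n\in\mathrm{dom}(f)\cap\mathrm{dom}(g)$ and $0$ otherwise. $\rho(f,g)=\sum_{n\in\mathbb N}\frac{a_{(f,g)}(n)+b_{(f,g)}(n)}{2^n}$, $\rho^\ast(f,g)=\rho(f^{-1},g^{-1})$. A topological inverse semigroup has continuous multiplication and inversion. *)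

theory Defs
  imports "HOL-Analysis.Analysis"
begin

text \<open>Partial bijections of nat, represented as partial maps f :: nat \<rightharpoonup> nat
  that are injective on their domain.  dom(f) = dom f, im(f) = ran f.\<close>

definition IN :: "(nat \<rightharpoonup> nat) set" where
  "IN = {f. inj_on f (dom f)}"

text \<open>Composition f \<circ> g (first g, then f): the library's map composition \<open>f \<circ>\<^sub>m g\<close>,
  whose domain is g^{-1}(dom f \<inter> im g).\<close>

definition pcomp :: "(nat \<rightharpoonup> nat) \<Rightarrow> (nat \<rightharpoonup> nat) \<Rightarrow> (nat \<rightharpoonup> nat)" where
  "pcomp f g = f \<circ>\<^sub>m g"

definition pinv :: "(nat \<rightharpoonup> nat) \<Rightarrow> (nat \<rightharpoonup> nat)" where
  "pinv f = (\<lambda>y. if y \<in> ran f then Some (THE x. f x = Some y) else None)"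

definition v_set :: "nat \<Rightarrow> nat \<Rightarrow> (nat \<rightharpoonup> nat) set" where
  "v_set x y = {f \<in> IN. f x = Some y}"

definition w1_set :: "nat \<Rightarrow> (nat \<rightharpoonup> nat) set" where
  "w1_set x = {f \<in> IN. x \<notin> dom f}"

definition w2_set :: "nat \<Rightarrow> (nat \<rightharpoonup> nat) set" where
  "w2_set y = {f \<in> IN. y \<notin> ran f}"

definition tau_pp :: "(nat \<rightharpoonup> nat) topology" where
  "tau_pp = subtopology
     (topology_generated_by
        ((\<lambda>(x,y). v_set x y) ` UNIV \<union> range w1_set \<union> range w2_set)) IN"

definition a_fun :: "(nat \<rightharpoonup> nat) \<Rightarrow> (nat \<rightharpoonup> nat) \<Rightarrow> nat \<Rightarrow> real" where
  "a_fun f g n = (if (n \<in> dom f \<inter> dom g) \<or> (n \<notin> dom f \<union> dom g) then 0 else 1)"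

definition b_fun :: "(nat \<rightharpoonup> nat) \<Rightarrow> (nat \<rightharpoonup> nat) \<Rightarrow> nat \<Rightarrow> real" where
  "b_fun f g n = (if n \<in> dom f \<inter> dom g
      then min 1 \<bar>real (the (f n)) - real (the (g n))\<bar> else 0)"

definition rho :: "(nat \<rightharpoonup> nat) \<Rightarrow> (nat \<rightharpoonup> nat) \<Rightarrow> real" where
  "rho f g = (\<Sum>n. (a_fun f g n + b_fun f g n) / 2 ^ n)"

definition rho_star :: "(nat \<rightharpoonup> nat) \<Rightarrow> (nat \<rightharpoonup> nat) \<Rightarrow> real" where
  "rho_star f g = rho (pinv f) (pinv g)"

definition dpp :: "(nat \<rightharpoonup> nat) \<Rightarrow> (nat \<rightharpoonup> nat) \<Rightarrow> real" where
  "dpp f g = rho f g + rho_star f g"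

definition Polish_top :: "'a topology \<Rightarrow> bool" where
  "Polish_top X \<longleftrightarrow> separable_space X \<and> completely_metrizable_space X"

definition topological_inverse_semigroup ::
  "'a topology \<Rightarrow> ('a \<Rightarrow> 'a \<Rightarrow> 'a) \<Rightarrow> ('a \<Rightarrow> 'a) \<Rightarrow> bool" where
  "topological_inverse_semigroup X mul iv \<longleftrightarrow>
     (\<forall>x\<in>topspace X. \<forall>y\<in>topspace X. \<forall>z\<in>topspace X.
        mul (mul x y) z = mul x (mul y z)) \<and>
     (\<forall>x\<in>topspace X. mul (mul x (iv x)) x = x \<and> mul (mul (iv x) x) (iv x) = iv x) \<and>
     (\<forall>x\<in>topspace X. \<forall>y\<in>topspace X.
        mul (mul x (iv x)) (mul y (iv y)) = mul (mul y (iv y)) (mul x (iv x))) \<and>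
     continuous_map (prod_topology X X) X (\<lambda>(x,y). mul x y) \<and>
     continuous_map X X iv"

end

theory Submission
  imports Defs
begin

text \<open>
  Both \<open>tau_pp\<close> and the metric \<open>d = rho + rho*\<close> have the same neighbourhood base at \<open>f\<close>:
  the partial bijections \<open>g\<close> such that \<open>g\<close> agrees with \<open>f\<close> and \<open>g\<^sup>-\<^sup>1\<close> agrees with
  \<open>f\<^sup>-\<^sup>1\<close> on \<open>{0..N}\<close>.  For \<open>tau_pp\<close> these sets are finite intersections of subbasic sets,
  and each subbasic set contains one around each of its points.  For \<open>d\<close> this holds because
  \<open>rho\<close> is the weighted Hamming distance \<open>\<Sum>n. [f n \<noteq> g n] / 2\<^sup>n\<close>, so \<open>rho f g < 2\<^sup>-\<^sup>N\<close>
  forces agreement on \<open>{0..N}\<close> and agreement on \<open>{0..N}\<close> gives \<open>rho f g \<le> 2\<^sup>-\<^sup>N\<close>.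

  Continuity is then finite bookkeeping: on \<open>{0..N}\<close>, \<open>f g\<close> and \<open>(f g)\<^sup>-\<^sup>1 = g\<^sup>-\<^sup>1 f\<^sup>-\<^sup>1\<close>
  only depend on \<open>f, g, f\<^sup>-\<^sup>1, g\<^sup>-\<^sup>1\<close> on a larger initial segment.  A \<open>d\<close>-Cauchy sequence
  and its sequence of inverses are eventually constant at every point; the pointwise limit is a
  partial bijection whose inverse is the pointwise limit of the inverses.  The finitely supported
  partial bijections form a countable dense set.
\<close>

section \<open>Partial bijections\<close>

lemma IN_iff: "f \<in> IN \<longleftrightarrow> (\<forall>x x' y. f x = Some y \<longrightarrow> f x' = Some y \<longrightarrow> x = x')"
  unfolding IN_def inj_on_def dom_def by auto

lemma map_eq_SomeI: "(\<And>x y. p x = Some y \<longleftrightarrow> q x = Some y) \<Longrightarrow> p = q"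
  by (rule ext) (metis not_None_eq)

lemma pinv_eq_Some_iff:
  assumes "f \<in> IN" shows "pinv f y = Some x \<longleftrightarrow> f x = Some y"
proof -
  have "(THE x. f x = Some y) = x" if "f x = Some y" for x
    using assms that by (auto simp: IN_iff)
  then show ?thesis
    by (auto simp: pinv_def ran_def)
qed

lemma pinv_eq_None_iff: "pinv f y = None \<longleftrightarrow> y \<notin> ran f"
  by (simp add: pinv_def)

lemma pinv_cong: "(\<And>x. f x = Some y \<longleftrightarrow> g x = Some y) \<Longrightarrow> pinv f y = pinv g y"
  by (simp add: pinv_def ran_def)

lemma pinv_in_IN: "f \<in> IN \<Longrightarrow> pinv f \<in> IN"
  by (auto simp: IN_iff pinv_eq_Some_iff)

lemma pinv_pinv: "f \<in> IN \<Longrightarrow> pinv (pinv f) = f"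
  by (rule map_eq_SomeI) (simp add: pinv_eq_Some_iff pinv_in_IN)

lemma pcomp_eq_Some_iff: "pcomp f g x = Some y \<longleftrightarrow> (\<exists>z. g x = Some z \<and> f z = Some y)"
  by (simp add: pcomp_def map_comp_Some_iff)

lemma pcomp_in_IN: "f \<in> IN \<Longrightarrow> g \<in> IN \<Longrightarrow> pcomp f g \<in> IN"
  unfolding IN_iff pcomp_eq_Some_iff by metis

lemma pinv_pcomp: "f \<in> IN \<Longrightarrow> g \<in> IN \<Longrightarrow> pinv (pcomp f g) = pcomp (pinv g) (pinv f)"
  by (rule map_eq_SomeI) (auto simp: pinv_eq_Some_iff pcomp_eq_Some_iff pcomp_in_IN pinv_in_IN)

lemma pcomp_assoc: "pcomp (pcomp f g) h = pcomp f (pcomp g h)"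
  by (rule map_eq_SomeI) (auto simp: pcomp_eq_Some_iff)

lemma pcomp_pinv_right: "f \<in> IN \<Longrightarrow> pcomp f (pinv f) = (\<lambda>y. if y \<in> ran f then Some y else None)"
  by (rule map_eq_SomeI) (auto simp: pinv_eq_Some_iff pcomp_eq_Some_iff ran_def)

lemma pcomp_pinv_cancel: "f \<in> IN \<Longrightarrow> pcomp (pcomp f (pinv f)) f = f"
  by (rule map_eq_SomeI) (auto simp: pinv_eq_Some_iff pcomp_eq_Some_iff)

section \<open>The weighted Hamming metric\<close>

definition weighted_hamming :: "(nat \<Rightarrow> 'a) \<Rightarrow> (nat \<Rightarrow> 'a) \<Rightarrow> real" where
  "weighted_hamming f g = (\<Sum>n. of_bool (f n \<noteq> g n) / 2 ^ n)"

lemma summable_weighted_hamming: "summable (\<lambda>n. of_bool (f n \<noteq> g n) / 2 ^ n :: real)"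
  by (rule summable_comparison_test'[OF summable_geometric[of "1/2"]])
     (auto simp: power_one_over)

lemma rho_eq_weighted_hamming: "rho f g = weighted_hamming f g"
proof -
  have "a_fun f g n + b_fun f g n = of_bool (f n \<noteq> g n)" for n
  proof (cases "n \<in> dom f \<inter> dom g")
    case True
    then obtain a b where "f n = Some a" "g n = Some b" by auto
    moreover have "a \<noteq> b \<Longrightarrow> 1 \<le> \<bar>real a - real b\<bar>" by linarith
    ultimately show ?thesis by (auto simp: a_fun_def b_fun_def min_def)
  qed (auto simp: a_fun_def b_fun_def)
  then show ?thesis by (simp add: rho_def weighted_hamming_def)
qed

interpretation weighted_hamming: Metric_space "UNIV :: (nat \<Rightarrow> 'a) set" weighted_hamming
proof
  fix f g h :: "nat \<Rightarrow> 'a"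
  show "0 \<le> weighted_hamming f g"
    unfolding weighted_hamming_def by (simp add: suminf_nonneg summable_weighted_hamming)
  show "weighted_hamming f g = weighted_hamming g f"
    unfolding weighted_hamming_def by (simp add: eq_commute)
  show "weighted_hamming f g = 0 \<longleftrightarrow> f = g"
    unfolding weighted_hamming_def
    by (subst suminf_eq_zero_iff[OF summable_weighted_hamming]) (auto simp: fun_eq_iff)
  have "weighted_hamming f h \<le> (\<Sum>n. of_bool (f n \<noteq> g n) / 2 ^ n + of_bool (g n \<noteq> h n) / 2 ^ n)"
    unfolding weighted_hamming_def
    by (intro suminf_le summable_add summable_weighted_hamming) (auto simp: divide_simps)
  also have "\<dots> = weighted_hamming f g + weighted_hamming g h"
    unfolding weighted_hamming_def by (intro suminf_add[symmetric] summable_weighted_hamming)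
  finally show "weighted_hamming f h \<le> weighted_hamming f g + weighted_hamming g h" .
qed

lemma weighted_hamming_less_imp_eq:
  assumes "weighted_hamming f g < 1 / 2 ^ N" and "n \<le> N"
  shows "f n = g n"
proof (rule ccontr)
  assume "f n \<noteq> g n"
  then have "1 / 2 ^ n \<le> weighted_hamming f g"
    unfolding weighted_hamming_def
    using sum_le_suminf[OF summable_weighted_hamming, of "{n}" f g] by simp
  moreover have "(1::real) / 2 ^ N \<le> 1 / 2 ^ n"
    using \<open>n \<le> N\<close> by (simp add: divide_simps power_increasing)
  ultimately show False using assms(1) by simp
qed

lemma weighted_hamming_le_if_eq_atMost:
  assumes "\<And>n. n \<le> N \<Longrightarrow> f n = g n"
  shows "weighted_hamming f g \<le> 1 / 2 ^ N"
proof -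
  let ?u = "\<lambda>n. of_bool (f n \<noteq> g n) / 2 ^ n :: real"
  have tail: "(\<lambda>n. (1/2) ^ (n + Suc N)) sums ((1/2) ^ N :: real)"
    using sums_mult2[OF geometric_sums[of "1/2::real"], of "(1/2) ^ Suc N"]
    by (simp add: power_add)
  have "weighted_hamming f g = (\<Sum>n. ?u (n + Suc N))"
    unfolding weighted_hamming_def
    using suminf_split_initial_segment[OF summable_weighted_hamming, of f g "Suc N"] assms by simp
  also have "\<dots> \<le> (\<Sum>n. (1/2) ^ (n + Suc N))"
    by (intro suminf_le summable_ignore_initial_segment summable_weighted_hamming
        sums_summable[OF tail]) (simp add: power_one_over)
  also have "\<dots> = 1 / 2 ^ N"
    using sums_unique[OF tail] by (simp add: power_one_over)
  finally show ?thesis .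
qed

lemma dpp_eq: "dpp f g = weighted_hamming f g + weighted_hamming (pinv f) (pinv g)"
  by (simp add: dpp_def rho_star_def rho_eq_weighted_hamming)

lemma Metric_space_dpp: "Metric_space IN dpp"
proof
  fix f g h :: "nat \<rightharpoonup> nat"
  show "0 \<le> dpp f g" by (simp add: dpp_eq)
  show "dpp f g = dpp g f" by (simp add: dpp_eq weighted_hamming.commute)
  have "dpp f g = 0 \<longleftrightarrow> weighted_hamming f g = 0 \<and> weighted_hamming (pinv f) (pinv g) = 0"
    unfolding dpp_eq by (intro add_nonneg_eq_0_iff weighted_hamming.nonneg)
  then show "dpp f g = 0 \<longleftrightarrow> f = g" by auto
  show "dpp f h \<le> dpp f g + dpp g h"
    using weighted_hamming.triangle[of f g h] weighted_hamming.triangle[of "pinv f" "pinv g" "pinv h"]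
    by (simp add: dpp_eq)
qed

interpretation dpp: Metric_space IN dpp
  by (rule Metric_space_dpp)

section \<open>Basic neighbourhoods\<close>

definition agree_nbhd :: "nat \<Rightarrow> (nat \<rightharpoonup> nat) \<Rightarrow> (nat \<rightharpoonup> nat) set" where
  "agree_nbhd N f = {g \<in> IN. \<forall>n\<le>N. g n = f n \<and> pinv g n = pinv f n}"

lemma agree_nbhd_subset_IN: "agree_nbhd N f \<subseteq> IN"
  by (auto simp: agree_nbhd_def)

lemma self_in_agree_nbhd: "f \<in> IN \<Longrightarrow> f \<in> agree_nbhd N f"
  by (simp add: agree_nbhd_def)

lemma agree_nbhd_antimono: "N \<le> M \<Longrightarrow> agree_nbhd M f \<subseteq> agree_nbhd N f"
  by (auto simp: agree_nbhd_def)

lemma mball_dpp_subset_agree_nbhd: "dpp.mball f (1 / 2 ^ N) \<subseteq> agree_nbhd N f"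
proof
  fix g assume "g \<in> dpp.mball f (1 / 2 ^ N)"
  then have g: "g \<in> IN" and less: "dpp f g < 1 / 2 ^ N" by auto
  have "weighted_hamming f g < 1 / 2 ^ N" "weighted_hamming (pinv f) (pinv g) < 1 / 2 ^ N"
    using less weighted_hamming.nonneg[of f g] weighted_hamming.nonneg[of "pinv f" "pinv g"]
    unfolding dpp_eq by linarith+
  then have "f n = g n \<and> pinv f n = pinv g n" if "n \<le> N" for n
    using weighted_hamming_less_imp_eq that by metis
  with g show "g \<in> agree_nbhd N f"
    by (simp add: agree_nbhd_def)
qed

lemma agree_nbhd_subset_mcball_dpp:
  assumes "f \<in> IN" shows "agree_nbhd N f \<subseteq> dpp.mcball f (2 / 2 ^ N)"
proof
  fix g assume "g \<in> agree_nbhd N f"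
  then have "g \<in> IN" "weighted_hamming f g \<le> 1 / 2 ^ N"
    "weighted_hamming (pinv f) (pinv g) \<le> 1 / 2 ^ N"
    by (auto simp: agree_nbhd_def intro!: weighted_hamming_le_if_eq_atMost)
  then show "g \<in> dpp.mcball f (2 / 2 ^ N)"
    using assms by (simp add: dpp_eq)
qed

lemma ex_two_div_power_less: "0 < r \<Longrightarrow> \<exists>N. 2 / 2 ^ N < (r::real)"
proof -
  assume "0 < r"
  then obtain N where "(1/2) ^ N < r / 2" using real_arch_pow_inv[of "r / 2" "1 / 2"] by auto
  then have "2 / 2 ^ N < r" by (simp add: power_one_over)
  then show ?thesis ..
qed

lemma openin_dpp_iff:
  "openin dpp.mtopology U \<longleftrightarrow> U \<subseteq> IN \<and> (\<forall>f\<in>U. \<exists>N. agree_nbhd N f \<subseteq> U)"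
proof -
  have "(\<exists>r>0. dpp.mball f r \<subseteq> U) \<longleftrightarrow> (\<exists>N. agree_nbhd N f \<subseteq> U)" if "f \<in> IN" for f
  proof
    assume "\<exists>r>0. dpp.mball f r \<subseteq> U"
    then obtain r N where "dpp.mball f r \<subseteq> U" "2 / 2 ^ N < r"
      using ex_two_div_power_less by blast
    then show "\<exists>N. agree_nbhd N f \<subseteq> U"
      using agree_nbhd_subset_mcball_dpp[OF that] dpp.mcball_subset_mball_concentric by blast
  next
    assume "\<exists>N. agree_nbhd N f \<subseteq> U"
    then obtain N where "agree_nbhd N f \<subseteq> U" ..
    then show "\<exists>r>0. dpp.mball f r \<subseteq> U"
      using mball_dpp_subset_agree_nbhd by (intro exI[of _ "1 / 2 ^ N"]) auto
  qed
  then show ?thesis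
    unfolding dpp.openin_mtopology by blast
qed

abbreviation tau_pp_subbasis :: "(nat \<rightharpoonup> nat) set set" where
  "tau_pp_subbasis \<equiv> (\<lambda>(x,y). v_set x y) ` UNIV \<union> range w1_set \<union> range w2_set"

lemma openin_tau_pp_subbasic:
  shows "openin tau_pp (v_set x y)" and "openin tau_pp (w1_set x)" and "openin tau_pp (w2_set y)"
proof -
  have subbasic: "openin tau_pp S" if S: "S \<in> tau_pp_subbasis" for S
  proof -
    from S have "S = S \<inter> IN" by (auto simp: v_set_def w1_set_def w2_set_def)
    with S show ?thesis
      unfolding tau_pp_def openin_subtopology by (blast intro: topology_generated_by_Basis)
  qed
  show "openin tau_pp (v_set x y)"
    by (rule subbasic) (intro UnI1 image_eqI[where x = "(x, y)"]; simp)
  show "openin tau_pp (w1_set x)" "openin tau_pp (w2_set y)"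
    by (auto intro: subbasic)
qed

lemma openin_tau_pp_agree_at: "openin tau_pp {g \<in> IN. g n = f n}"
proof (cases "f n")
  case None
  then have "{g \<in> IN. g n = f n} = w1_set n" by (auto simp: w1_set_def)
  then show ?thesis by (simp add: openin_tau_pp_subbasic)
next
  case (Some y)
  then have "{g \<in> IN. g n = f n} = v_set n y" by (auto simp: v_set_def)
  then show ?thesis by (simp add: openin_tau_pp_subbasic)
qed

lemma openin_tau_pp_agree_inv_at: "openin tau_pp {g \<in> IN. pinv g n = pinv f n}"
proof (cases "pinv f n")
  case None
  then have "{g \<in> IN. pinv g n = pinv f n} = w2_set n"
    by (simp add: w2_set_def flip: pinv_eq_None_iff)
  then show ?thesis by (simp add: openin_tau_pp_subbasic)
next
  case (Some x)
  then have "{g \<in> IN. pinv g n = pinv f n} = v_set x n" by (auto simp: v_set_def pinv_eq_Some_iff)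
  then show ?thesis by (simp add: openin_tau_pp_subbasic)
qed

lemma openin_tau_pp_agree_nbhd: "openin tau_pp (agree_nbhd N f)"
proof -
  have "agree_nbhd N f = (\<Inter>n\<in>{..N}. {g \<in> IN. g n = f n} \<inter> {g \<in> IN. pinv g n = pinv f n})"
    by (auto simp: agree_nbhd_def)
  then show ?thesis
    by (simp add: openin_INT2 openin_Int openin_tau_pp_agree_at openin_tau_pp_agree_inv_at)
qed

lemma generated_open_contains_agree_nbhd:
  assumes "generate_topology_on tau_pp_subbasis T" and "f \<in> T"
  shows "\<exists>N. agree_nbhd N f \<subseteq> T"
  using assms
proof (induction arbitrary: f)
  case (Int S T)
  then obtain N1 N2 where "agree_nbhd N1 f \<subseteq> S" "agree_nbhd N2 f \<subseteq> T" by blast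
  then have "agree_nbhd (max N1 N2) f \<subseteq> S \<inter> T"
    using agree_nbhd_antimono[of N1 "max N1 N2" f] agree_nbhd_antimono[of N2 "max N1 N2" f] by auto
  then show ?case by blast
next
  case (Basis S)
  then consider x y where "S = v_set x y" | x where "S = w1_set x" | y where "S = w2_set y"
    by auto
  then show ?case
  proof cases
    case (1 x y)
    with Basis.prems have "agree_nbhd x f \<subseteq> S" by (auto simp: agree_nbhd_def v_set_def)
    then show ?thesis by blast
  next
    case (2 x)
    with Basis.prems have "agree_nbhd x f \<subseteq> S" by (auto simp: agree_nbhd_def w1_set_def)
    then show ?thesis by blast
  next
    case (3 y)
    with Basis.prems have "agree_nbhd y f \<subseteq> S"
      by (auto simp: agree_nbhd_def w2_set_def simp flip: pinv_eq_None_iff)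
    then show ?thesis by blast
  qed
qed blast+

lemma openin_tau_pp_iff:
  "openin tau_pp U \<longleftrightarrow> U \<subseteq> IN \<and> (\<forall>f\<in>U. \<exists>N. agree_nbhd N f \<subseteq> U)"
proof
  assume "openin tau_pp U"
  then obtain T where T: "generate_topology_on tau_pp_subbasis T" "U = T \<inter> IN"
    unfolding tau_pp_def openin_subtopology openin_topology_generated_by_iff by blast
  then show "U \<subseteq> IN \<and> (\<forall>f\<in>U. \<exists>N. agree_nbhd N f \<subseteq> U)"
    using generated_open_contains_agree_nbhd agree_nbhd_subset_IN by blast
next
  assume "U \<subseteq> IN \<and> (\<forall>f\<in>U. \<exists>N. agree_nbhd N f \<subseteq> U)"
  then show "openin tau_pp U"
    by (subst openin_subopen) (meson openin_tau_pp_agree_nbhd self_in_agree_nbhd subsetD)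
qed

lemma topspace_tau_pp: "topspace tau_pp = IN"
proof (rule antisym)
  show "topspace tau_pp \<subseteq> IN" by (simp add: tau_pp_def)
  have "openin tau_pp IN" by (simp add: openin_tau_pp_iff agree_nbhd_subset_IN)
  then show "IN \<subseteq> topspace tau_pp" by (rule openin_subset)
qed

lemma mtopology_dpp_eq_tau_pp: "dpp.mtopology = tau_pp"
  by (simp add: topology_eq openin_dpp_iff openin_tau_pp_iff)

section \<open>Continuity of inversion and composition\<close>

lemma continuous_map_into_tau_pp:
  assumes "h ` topspace X \<subseteq> IN"
    and "\<And>x N. x \<in> topspace X \<Longrightarrow> \<exists>V. openin X V \<and> x \<in> V \<and> h ` V \<subseteq> agree_nbhd N (h x)"
  shows "continuous_map X tau_pp h"
  unfolding continuous_map_def topspace_tau_pp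
proof (intro conjI allI impI)
  show "h \<in> topspace X \<rightarrow> IN" using assms(1) by auto
  fix U assume U: "openin tau_pp U"
  show "openin X {x \<in> topspace X. h x \<in> U}"
  proof (subst openin_subopen, intro ballI)
    fix x assume x: "x \<in> {x \<in> topspace X. h x \<in> U}"
    then obtain N where N: "agree_nbhd N (h x) \<subseteq> U"
      using U by (auto simp: openin_tau_pp_iff)
    obtain V where V: "openin X V" "x \<in> V" "h ` V \<subseteq> agree_nbhd N (h x)"
      using assms(2) x by blast
    then show "\<exists>T. openin X T \<and> x \<in> T \<and> T \<subseteq> {x \<in> topspace X. h x \<in> U}"
      using N openin_subset[OF V(1)] by blast
  qed
qed

lemma pinv_in_agree_nbhd: "f \<in> IN \<Longrightarrow> g \<in> agree_nbhd N f \<Longrightarrow> pinv g \<in> agree_nbhd N (pinv f)"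
  by (auto simp: agree_nbhd_def pinv_in_IN pinv_pinv)

lemma continuous_map_pinv: "continuous_map tau_pp tau_pp pinv"
proof (rule continuous_map_into_tau_pp)
  show "pinv ` topspace tau_pp \<subseteq> IN" by (auto simp: topspace_tau_pp pinv_in_IN)
  fix f N assume "f \<in> topspace tau_pp"
  then show "\<exists>V. openin tau_pp V \<and> f \<in> V \<and> pinv ` V \<subseteq> agree_nbhd N (pinv f)"
    by (intro exI[of _ "agree_nbhd N f"])
       (auto simp: topspace_tau_pp openin_tau_pp_agree_nbhd self_in_agree_nbhd pinv_in_agree_nbhd)
qed

lemma ex_bound_values_atMost:
  fixes p :: "nat \<rightharpoonup> nat"
  shows "\<exists>M. \<forall>x\<le>N. \<forall>z. p x = Some z \<longrightarrow> z \<le> M"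
proof -
  have "finite ((\<lambda>x. the (p x)) ` {..N})" by simp
  then obtain M where "\<forall>x\<le>N. the (p x) \<le> M"
    by (auto simp: finite_nat_set_iff_bounded_le)
  then show ?thesis by (metis option.sel)
qed

lemma pcomp_agree_nbhd:
  assumes f: "f \<in> IN" and g: "g \<in> IN"
  obtains M where "\<And>f' g'. f' \<in> agree_nbhd M f \<Longrightarrow> g' \<in> agree_nbhd M g \<Longrightarrow>
    pcomp f' g' \<in> agree_nbhd N (pcomp f g)"
proof -
  obtain Mg where Mg: "\<forall>x\<le>N. \<forall>z. g x = Some z \<longrightarrow> z \<le> Mg"
    using ex_bound_values_atMost by blast
  obtain Mf where Mf: "\<forall>y\<le>N. \<forall>z. pinv f y = Some z \<longrightarrow> z \<le> Mf"
    using ex_bound_values_atMost by blast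
  define M where "M = max N (max Mg Mf)"
  \<comment> \<open>For \<open>x \<le> N\<close>, \<open>pcomp f g x\<close> reads \<open>g\<close> at \<open>x\<close> and \<open>f\<close> at \<open>g x \<le> Mg\<close>; dually for the
    inverse \<open>pcomp (pinv g) (pinv f)\<close>.\<close>
  have "pcomp f' g' \<in> agree_nbhd N (pcomp f g)"
    if f': "f' \<in> agree_nbhd M f" and g': "g' \<in> agree_nbhd M g" for f' g'
  proof -
    have IN': "f' \<in> IN" "g' \<in> IN" using f' g' by (auto simp: agree_nbhd_def)
    have f'_agree: "f' n = f n \<and> pinv f' n = pinv f n" if "n \<le> M" for n
      using f' that by (auto simp: agree_nbhd_def)
    have g'_agree: "g' n = g n \<and> pinv g' n = pinv g n" if "n \<le> M" for n
      using g' that by (auto simp: agree_nbhd_def)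
    have "pcomp f' g' x = pcomp f g x" if "x \<le> N" for x
      using that f'_agree g'_agree Mg by (cases "g x") (auto simp: pcomp_def map_comp_def M_def)
    moreover have "pinv (pcomp f' g') y = pinv (pcomp f g) y" if "y \<le> N" for y
    proof -
      have "pcomp (pinv g') (pinv f') y = pcomp (pinv g) (pinv f) y"
        using that f'_agree g'_agree Mf
        by (cases "pinv f y") (auto simp: pcomp_def map_comp_def M_def)
      then show ?thesis by (simp add: pinv_pcomp f g IN')
    qed
    ultimately show ?thesis
      using pcomp_in_IN[OF IN'] by (auto simp: agree_nbhd_def)
  qed
  then show ?thesis by (rule that)
qed

lemma continuous_map_pcomp:
  "continuous_map (prod_topology tau_pp tau_pp) tau_pp (\<lambda>(f, g). pcomp f g)"
proof (rule continuous_map_into_tau_pp)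
  show "(\<lambda>(f, g). pcomp f g) ` topspace (prod_topology tau_pp tau_pp) \<subseteq> IN"
    by (auto simp: topspace_tau_pp pcomp_in_IN)
  fix p N assume "p \<in> topspace (prod_topology tau_pp tau_pp)"
  then obtain f g where p: "p = (f, g)" and f: "f \<in> IN" and g: "g \<in> IN"
    by (auto simp: topspace_tau_pp)
  obtain M where M: "\<And>f' g'. f' \<in> agree_nbhd M f \<Longrightarrow> g' \<in> agree_nbhd M g \<Longrightarrow>
      pcomp f' g' \<in> agree_nbhd N (pcomp f g)"
    using pcomp_agree_nbhd[OF f g] by blast
  show "\<exists>V. openin (prod_topology tau_pp tau_pp) V \<and> p \<in> V \<and>
      (\<lambda>(f, g). pcomp f g) ` V \<subseteq> agree_nbhd N ((\<lambda>(f, g). pcomp f g) p)"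
    by (intro exI[of _ "agree_nbhd M f \<times> agree_nbhd M g"])
       (auto simp: p f g M openin_prod_Times_iff openin_tau_pp_agree_nbhd self_in_agree_nbhd)
qed

lemma topological_inverse_semigroup_tau_pp: "topological_inverse_semigroup tau_pp pcomp pinv"
  unfolding topological_inverse_semigroup_def topspace_tau_pp
proof (intro conjI ballI continuous_map_pinv continuous_map_pcomp)
  fix f g h assume f: "f \<in> IN" and g: "g \<in> IN"
  show "pcomp (pcomp f g) h = pcomp f (pcomp g h)" by (rule pcomp_assoc)
  show "pcomp (pcomp f (pinv f)) f = f" using f by (rule pcomp_pinv_cancel)
  show "pcomp (pcomp (pinv f) f) (pinv f) = pinv f"
    using pcomp_pinv_cancel[OF pinv_in_IN[OF f]] by (simp add: pinv_pinv f)
  show "pcomp (pcomp f (pinv f)) (pcomp g (pinv g)) = pcomp (pcomp g (pinv g)) (pcomp f (pinv f))"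
    unfolding pcomp_pinv_right[OF f] pcomp_pinv_right[OF g]
    by (rule ext) (simp add: pcomp_def map_comp_def)
qed

section \<open>Completeness and separability\<close>

lemma MCauchy_dpp_eventually_constant:
  assumes "dpp.MCauchy \<sigma>"
  shows "\<exists>c c'. \<forall>\<^sub>F n in sequentially. \<sigma> n k = c \<and> pinv (\<sigma> n) k = c'"
proof -
  obtain K where K: "\<And>n n'. K \<le> n \<Longrightarrow> K \<le> n' \<Longrightarrow> dpp (\<sigma> n) (\<sigma> n') < 1 / 2 ^ k"
    using assms unfolding dpp.MCauchy_def
    by (meson divide_pos_pos zero_less_one zero_less_numeral zero_less_power)
  have "\<sigma> n k = \<sigma> K k \<and> pinv (\<sigma> n) k = pinv (\<sigma> K) k" if "K \<le> n" for n
  proof -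
    have "\<sigma> n \<in> dpp.mball (\<sigma> K) (1 / 2 ^ k)"
      using K[OF order_refl that] assms by (auto simp: dpp.MCauchy_def)
    then have "\<sigma> n \<in> agree_nbhd k (\<sigma> K)"
      using mball_dpp_subset_agree_nbhd[of "\<sigma> K" k] by blast
    then show ?thesis by (simp add: agree_nbhd_def)
  qed
  then show ?thesis
    unfolding eventually_sequentially by blast
qed

lemma eventually_agree_limit_in_IN:
  assumes \<sigma>: "\<And>n. \<sigma> n \<in> IN"
    and lim: "\<And>k. \<forall>\<^sub>F n in sequentially. \<sigma> n k = f k \<and> pinv (\<sigma> n) k = h k"
  shows "f \<in> IN \<and> pinv f = h"
proof -
  have agree_somewhere: "\<exists>n. \<sigma> n a = f a \<and> \<sigma> n b = f b \<and> pinv (\<sigma> n) c = h c" for a b c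
  proof -
    have "\<forall>\<^sub>F n in sequentially. \<sigma> n a = f a \<and> \<sigma> n b = f b \<and> pinv (\<sigma> n) c = h c"
      using lim[of a] lim[of b] lim[of c] by eventually_elim simp
    then show ?thesis by (rule eventually_happens'[OF sequentially_bot])
  qed
  have f: "f \<in> IN"
    unfolding IN_iff
  proof (intro allI impI)
    fix a b y assume "f a = Some y" "f b = Some y"
    moreover obtain n where "\<sigma> n a = f a" "\<sigma> n b = f b" using agree_somewhere by blast
    ultimately show "a = b" using \<sigma>[of n] by (auto simp: IN_iff)
  qed
  moreover have "pinv f = h"
  proof (rule map_eq_SomeI)
    fix y x
    obtain n where n: "\<sigma> n x = f x" "pinv (\<sigma> n) y = h y" using agree_somewhere by blast
    have "pinv f y = Some x \<longleftrightarrow> f x = Some y" by (rule pinv_eq_Some_iff[OF f])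
    also have "\<dots> \<longleftrightarrow> \<sigma> n x = Some y" by (simp add: n)
    also have "\<dots> \<longleftrightarrow> pinv (\<sigma> n) y = Some x" by (rule pinv_eq_Some_iff[OF \<sigma>, symmetric])
    also have "\<dots> \<longleftrightarrow> h y = Some x" by (simp add: n)
    finally show "pinv f y = Some x \<longleftrightarrow> h y = Some x" .
  qed
  ultimately show ?thesis ..
qed

lemma limitin_dpp_if_eventually_agree:
  assumes f: "f \<in> IN" and \<sigma>: "\<And>n. \<sigma> n \<in> IN"
    and lim: "\<And>k. \<forall>\<^sub>F n in sequentially. \<sigma> n k = f k \<and> pinv (\<sigma> n) k = pinv f k"
  shows "limitin dpp.mtopology \<sigma> f sequentially"
  unfolding dpp.limitin_metric
proof (intro conjI allI impI f)
  fix \<epsilon> :: real assume "0 < \<epsilon>"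
  then obtain N where N: "2 / 2 ^ N < \<epsilon>" using ex_two_div_power_less by blast
  have "\<forall>\<^sub>F n in sequentially. \<forall>k\<in>{..N}. \<sigma> n k = f k \<and> pinv (\<sigma> n) k = pinv f k"
    using lim by (intro eventually_ball_finite) auto
  then show "\<forall>\<^sub>F n in sequentially. \<sigma> n \<in> IN \<and> dpp (\<sigma> n) f < \<epsilon>"
  proof (rule eventually_mono)
    fix n assume "\<forall>k\<in>{..N}. \<sigma> n k = f k \<and> pinv (\<sigma> n) k = pinv f k"
    then have "\<sigma> n \<in> agree_nbhd N f" by (simp add: agree_nbhd_def \<sigma>)
    then have "dpp f (\<sigma> n) \<le> 2 / 2 ^ N" using agree_nbhd_subset_mcball_dpp[OF f, of N] by auto
    with N show "\<sigma> n \<in> IN \<and> dpp (\<sigma> n) f < \<epsilon>" by (simp add: \<sigma> dpp.commute[of "\<sigma> n"])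
  qed
qed

lemma mcomplete_dpp: "dpp.mcomplete"
  unfolding dpp.mcomplete_def
proof (intro allI impI)
  fix \<sigma> assume Cauchy: "dpp.MCauchy \<sigma>"
  then have \<sigma>: "\<And>n. \<sigma> n \<in> IN" by (auto simp: dpp.MCauchy_def)
  obtain f h where lim: "\<And>k. \<forall>\<^sub>F n in sequentially. \<sigma> n k = f k \<and> pinv (\<sigma> n) k = h k"
    using MCauchy_dpp_eventually_constant[OF Cauchy] by metis
  with \<sigma> have "f \<in> IN \<and> pinv f = h" by (rule eventually_agree_limit_in_IN)
  then have "limitin dpp.mtopology \<sigma> f sequentially"
    using \<sigma> lim by (intro limitin_dpp_if_eventually_agree) auto
  then show "\<exists>f. limitin dpp.mtopology \<sigma> f sequentially" by blast
qed

lemma countable_finite_dom: "countable {m :: 'a::countable \<rightharpoonup> 'b::countable. finite (dom m)}"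
proof (rule countable_image_inj_on)
  have "Map.graph ` {m :: 'a \<rightharpoonup> 'b. finite (dom m)} \<subseteq> {A. finite A}"
    by auto
  then show "countable (Map.graph ` {m :: 'a \<rightharpoonup> 'b. finite (dom m)})"
    using countable_Collect_finite by (rule countable_subset)
  show "inj_on Map.graph {m :: 'a \<rightharpoonup> 'b. finite (dom m)}"
    by (intro inj_onI ext) (metis in_graphD in_graphI not_None_eq)
qed

text \<open>For \<open>y \<notin> ran f\<close> the set below contains the junk point \<open>the None\<close>, which is harmless.\<close>

lemma restrict_in_agree_nbhd:
  assumes f: "f \<in> IN"
  shows "f |` ({..N} \<union> the ` pinv f ` {..N}) \<in> agree_nbhd N f"
proof -
  define g where "g = f |` ({..N} \<union> the ` pinv f ` {..N})"
  have "g \<in> IN" using f by (auto simp: IN_iff g_def restrict_map_def)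
  moreover have "g n = f n" if "n \<le> N" for n
    using that by (simp add: g_def)
  moreover have "pinv g n = pinv f n" if "n \<le> N" for n
  proof (rule pinv_cong)
    show "g x = Some n \<longleftrightarrow> f x = Some n" for x
      using that pinv_eq_Some_iff[OF f, of n x] by (force simp: g_def restrict_map_def)
  qed
  ultimately show ?thesis by (simp add: agree_nbhd_def g_def)
qed

lemma separable_space_tau_pp: "separable_space tau_pp"
  unfolding separable_space_def
proof (intro exI conjI)
  let ?D = "{g \<in> IN. finite (dom g)}"
  show "countable ?D" by (rule countable_subset[OF _ countable_finite_dom]) auto
  show "?D \<subseteq> topspace tau_pp" by (auto simp: topspace_tau_pp)
  show "tau_pp closure_of ?D = topspace tau_pp"
    unfolding dense_intersects_open
  proof (intro allI impI)
    fix U assume U: "openin tau_pp U \<and> U \<noteq> {}"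
    then obtain f where "f \<in> U" by blast
    with U obtain N where "f \<in> IN" "agree_nbhd N f \<subseteq> U"
      unfolding openin_tau_pp_iff by blast
    then have "f |` ({..N} \<union> the ` pinv f ` {..N}) \<in> ?D \<inter> U"
      using restrict_in_agree_nbhd[of f N] by (auto simp: agree_nbhd_def)
    then show "?D \<inter> U \<noteq> {}" by blast
  qed
qed

theorem theorem4p4:
  shows "Polish_top tau_pp \<and> topological_inverse_semigroup tau_pp pcomp pinv \<and>
         Metric_space IN dpp \<and> Metric_space.mcomplete IN dpp \<and>
         Metric_space.mtopology IN dpp = tau_pp"
proof -
  have "completely_metrizable_space tau_pp"
    using dpp.completely_metrizable_space_mtopology[OF mcomplete_dpp]
    by (simp add: mtopology_dpp_eq_tau_pp)
  then show ?thesis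
    using separable_space_tau_pp topological_inverse_semigroup_tau_pp Metric_space_dpp
      mcomplete_dpp mtopology_dpp_eq_tau_pp
    by (simp add: Polish_top_def)
qed

end
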